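(* Let $X=\{x_1,\dots,x_n\}\subset\mathbb{R}^d$, let $t>0$ and $\sigma\ge 0$, and let $\mathbf{H}_t$ be the heat kernel of a graph on $X$ as described in the context, with heat-geodesic dissimilarity $d_t$. Suppose that either $\sigma=0$, or the manifold has uniform volume growth in the sense that $(\mathbf{H}_t)_{ii}=(\mathbf{H}_t)_{jj}$ for all $i,j$. Suppose moreover that the heat kernel is pointwise monotonically decreasing in the sense that for all $x,y,z\in X$, $\|x-y\|_2>\|x-z\|_2$ implies $\mathbf{H}_t(x,y)<\mathbf{H}_t(x,z)$. Then for all triples $x,y,z\in X$, $\|x-y\|_2>\|x-z\|_2$ implies $d_t(x,y)>d_t(x,z)$; that is, the heat-geodesic dissimilarity is order preserving.
   Context: A weighted undirected graph on $X$ is given by a symmetric nonnegative weight matrix $\mathbf{W}\in\mathbb{R}^{n\times n}$ (e.g. $\mathbf{W}_{ij}=\kappa(x_i,x_j)$ for a kernel $\kappa$). Let $\mathbf{Q}$ be the diagonal degree matrix $\mathbf{Q}_{ii}=\sum_j\mathbf{W}_{ij}$, assumed $>0$. The graph Laplacian $\mathbf{L}$ is either the combinatorial Laplacian $\mathbf{Q}-\mathbf{W}$ or the symmetric normalized Laplacian $I_n-\mathbf{Q}^{-1/2}\mathbf{W}\mathbf{Q}^{-1/2}$, and the heat kernel is the matrix exponential $\mathbf{H}_t=e^{-t\mathbf{L}}$; we write $\mathbf{H}_t(x_i,x_j)=(\mathbf{H}_t)_{ij}$. Define $(\mathbf{V}_t)_{ij}=2\,[(\mathbf{H}_t)_{ii}+(\mathbf{H}_t)_{jj}]^{-1}$.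 The heat-geodesic dissimilarity is $d_t(x_i,x_j)=\left[-4t\log(\mathbf{H}_t)_{ij}-4\sigma t\log(\mathbf{V}_t)_{ij}\right]^{1/2}$ (logarithms taken entrywise), where it is assumed that the entries of $\mathbf{H}_t$ are positive and the bracketed quantity is nonnegative, so that $d_t$ is a well-defined real number. *)

theory Defs
  imports "HOL-Analysis.Analysis"
begin

primrec matpow :: "real^'n^'n \<Rightarrow> nat \<Rightarrow> real^'n^'n" where
  "matpow A 0 = mat 1"
| "matpow A (Suc k) = A ** matpow A k"

definition mexp :: "real^'n^'n \<Rightarrow> real^'n^'n" where
  "mexp A = (\<Sum>k. (1 / fact k) *\<^sub>R matpow A k)"

definition degree_mat :: "real^'n^'n \<Rightarrow> real^'n^'n" where
  "degree_mat W = (\<chi> i j. if i = j then (\<Sum>k\<in>UNIV. W $ i $ k) else 0)"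

definition comb_laplacian :: "real^'n^'n \<Rightarrow> real^'n^'n" where
  "comb_laplacian W = degree_mat W - W"

definition norm_laplacian :: "real^'n^'n \<Rightarrow> real^'n^'n" where
  "norm_laplacian W =
     (let D = (\<chi> i j. if i = j then 1 / sqrt (\<Sum>k\<in>UNIV. W $ i $ k) else 0)
      in mat 1 - D ** W ** D)"

definition heat_kernel :: "real^'n^'n \<Rightarrow> real \<Rightarrow> real^'n^'n" where
  "heat_kernel L t = mexp ((- t) *\<^sub>R L)"

definition Vmat :: "real^'n^'n \<Rightarrow> real^'n^'n" where
  "Vmat H = (\<chi> i j. 2 / (H $ i $ i + H $ j $ j))"

definition heat_geo_sq :: "real \<Rightarrow> real \<Rightarrow> real^'n^'n \<Rightarrow> 'n \<Rightarrow> 'n \<Rightarrow> real" where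
  "heat_geo_sq \<sigma> t H i j =
     - 4 * t * ln (H $ i $ j) - 4 * \<sigma> * t * ln (Vmat H $ i $ j)"

definition heat_geo :: "real \<Rightarrow> real \<Rightarrow> real^'n^'n \<Rightarrow> 'n \<Rightarrow> 'n \<Rightarrow> real" where
  "heat_geo \<sigma> t H i j = sqrt (heat_geo_sq \<sigma> t H i j)"

end

theory Submission
  imports Defs
begin

text \<open>For fixed \<open>x\<^sub>i\<close>, the volume term \<open>\<sigma> log (V\<^sub>t)\<^sub>i\<^sub>j\<close> does not depend on \<open>j\<close> when
  \<open>\<sigma> = 0\<close> or the diagonal of \<open>H\<^sub>t\<close> is constant, so \<open>d\<^sub>t(x\<^sub>i, x\<^sub>j)\<^sup>2\<close> equals \<open>-4t log H\<^sub>t(x\<^sub>i, x\<^sub>j)\<close>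
  up to a constant and is strictly decreasing in \<open>H\<^sub>t(x\<^sub>i, x\<^sub>j)\<close>. Composing with the assumed
  monotonicity of the heat kernel gives the claim.\<close>

lemma Vmat_eq_if_diag_eq:
  assumes "H $ j $ j = H $ k $ k"
  shows "Vmat H $ i $ j = Vmat H $ i $ k"
  using assms by (simp add: Vmat_def)

lemma heat_geo_sq_strict_antimono:
  assumes "t > 0" and "0 < H $ i $ j" and "H $ i $ j < H $ i $ k"
    and "\<sigma> = 0 \<or> H $ j $ j = H $ k $ k"
  shows "heat_geo_sq \<sigma> t H i k < heat_geo_sq \<sigma> t H i j"
proof -
  have volume_term: "4 * \<sigma> * t * ln (Vmat H $ i $ j) = 4 * \<sigma> * t * ln (Vmat H $ i $ k)"
    using assms(4) Vmat_eq_if_diag_eq[of H j k i] by auto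
  have "ln (H $ i $ j) < ln (H $ i $ k)"
    using assms(2,3) by simp
  then have "4 * t * ln (H $ i $ j) < 4 * t * ln (H $ i $ k)"
    using assms(1) by simp
  with volume_term show ?thesis
    unfolding heat_geo_sq_def by linarith
qed

lemma heat_geo_strict_antimono:
  assumes "t > 0" and "0 < H $ i $ j" and "H $ i $ j < H $ i $ k"
    and "\<sigma> = 0 \<or> H $ j $ j = H $ k $ k"
    and "heat_geo_sq \<sigma> t H i k \<ge> 0"
  shows "heat_geo \<sigma> t H i k < heat_geo \<sigma> t H i j"
  using heat_geo_sq_strict_antimono[OF assms(1-4)] assms(5)
  unfolding heat_geo_def by simp

theorem proposition1:
  fixes X :: "'n::finite \<Rightarrow> real^'d"
    and W L :: "real^'n^'n"
    and t \<sigma> :: real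
  assumes W_sym: "transpose W = W"
    and W_nonneg: "\<forall>i j. W $ i $ j \<ge> 0"
    and deg_pos: "\<forall>i. (\<Sum>k\<in>UNIV. W $ i $ k) > 0"
    and L_def: "L = comb_laplacian W \<or> L = norm_laplacian W"
    and t_pos: "t > 0"
    and sigma_nonneg: "\<sigma> \<ge> 0"
    and H_pos: "\<forall>i j. heat_kernel L t $ i $ j > 0"
    and bracket_nonneg: "\<forall>i j. heat_geo_sq \<sigma> t (heat_kernel L t) i j \<ge> 0"
    and sigma_or_uniform: "\<sigma> = 0 \<or> (\<forall>i j. heat_kernel L t $ i $ i = heat_kernel L t $ j $ j)"
    and H_mono: "\<forall>i j k. norm (X i - X j) > norm (X i - X k)
                   \<longrightarrow> heat_kernel L t $ i $ j < heat_kernel L t $ i $ k"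
  shows "\<forall>i j k. norm (X i - X j) > norm (X i - X k)
           \<longrightarrow> heat_geo \<sigma> t (heat_kernel L t) i j > heat_geo \<sigma> t (heat_kernel L t) i k"
proof (intro allI impI)
  fix i j k
  assume "norm (X i - X j) > norm (X i - X k)"
  then have "heat_kernel L t $ i $ j < heat_kernel L t $ i $ k"
    using H_mono by blast
  moreover have "\<sigma> = 0 \<or> heat_kernel L t $ j $ j = heat_kernel L t $ k $ k"
    using sigma_or_uniform by blast
  ultimately show "heat_geo \<sigma> t (heat_kernel L t) i j > heat_geo \<sigma> t (heat_kernel L t) i k"
    using heat_geo_strict_antimono t_pos H_pos bracket_nonneg by blast
qed

end
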